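(* Let $(f_n)$ be a sequence of complex rational maps of degree $d\ge1$ and $\eta$ a scale. Let $\mathcal C(f)_\eta$ denote the limit in $\mathbb P^1(\mathscr H_\eta)$ of the critical divisors $\mathcal C(f_n)$ (and, when $\eta<(1)$, $\widetilde{\mathcal C}(f)_\eta$ its limit in $\mathbb P^1(\widetilde{\mathscr H}_\eta)$). Then $$\mathcal C(f)_\eta=\mathcal C(f_\eta)+2D_\eta(f),\qquad \widetilde{\mathcal C}(f)_\eta=\mathcal C(\tilde f_\eta)+2\tilde D_\eta(f).$$
   Context: Fix a non-principal ultrafilter $\omega$ on $\mathbb N$; $\lim$ denotes the limit along $\omega$. A scale is an equivalence class of bounded sequences $\varepsilon=(\varepsilon_n)$ of positive reals, $(\varepsilon_n)\sim(\eta_n)$ iff $\lim\varepsilon_n/\eta_n\in(0,\infty)$; scales are totally ordered by $\varepsilon\le\eta$ iff $\lim \varepsilon_n/\eta_n<\infty$; the maximal scale is $(1)$. For a scale $\varepsilon$, $\mathscr H_\varepsilon$ is the quotient of $\{(z_n)\in\mathbb C^{\mathbb N}:\lim|z_n|^{\varepsilon_n}<\infty\}$ by $\{(z_n):\lim|z_n|^{\varepsilon_n}=0\}$, normed by $|(z_n)|=\lim|z_n|^{\min(1,\varepsilon_n)}$; $\mathscr H_{(1)}\cong\mathbb C$, and for $\varepsilon<(1)$ it is an algebraically closed complete non-Archimedean field with residue field $\widetilde{\mathscr H}_\varepsilon$ of characteristic $0$. For a sequence $(f_n)$ of complex rational maps of degree $d$, write $f_n=[P_n:Q_n]$ with coefficients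 of maximal modulus $1$; the coefficient sequences define $P_\varepsilon,Q_\varepsilon$ over $\mathscr H_\varepsilon$ (resp. their reductions over $\widetilde{\mathscr H}_\varepsilon$); with $H=\gcd(P_\varepsilon,Q_\varepsilon)$, $P_\varepsilon=H\hat P_\varepsilon$, $Q_\varepsilon=H\hat Q_\varepsilon$, the limit is $f_\varepsilon=[\hat P_\varepsilon:\hat Q_\varepsilon]$ and the hole divisor $D_\varepsilon(f)$ is the divisor of zeros of $H$; $\tilde f_\varepsilon$, $\tilde D_\varepsilon(f)$ are defined likewise over $\widetilde{\mathscr H}_\varepsilon$. A sequence of effective divisors of fixed degree on $\mathbb P^1(\mathbb C)$ has a limit in $\mathbb P^1(\mathscr H_\varepsilon)$ (resp. $\mathbb P^1(\widetilde{\mathscr H}_\varepsilon)$), defined by taking the limit of the coefficients of a normalized defining homogeneous polynomial. The critical divisor of a rational map $g$ is $\mathcal C(g)=\sum_p(\deg_p g-1)[p]$. *)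

theory Defs
  imports "HOL-Analysis.Analysis" "HOL-Computational_Algebra.Polynomial_Factorial"
begin

definition free_ultrafilter :: "nat filter \<Rightarrow> bool" where
  "free_ultrafilter w \<longleftrightarrow> w \<noteq> bot \<and> w \<le> cofinite \<and>
     (\<forall>P. eventually P w \<or> eventually (\<lambda>n. \<not> P n) w)"

text \<open>Scales are represented by bounded sequences of positive reals; the relations
  between scales are stated on representatives (they are invariant under equivalence).\<close>
definition is_scale :: "(nat \<Rightarrow> real) \<Rightarrow> bool" where
  "is_scale e \<longleftrightarrow> (\<forall>n. e n > 0) \<and> (\<exists>B. \<forall>n. e n \<le> B)"

definition scale_le :: "nat filter \<Rightarrow> (nat \<Rightarrow> real) \<Rightarrow> (nat \<Rightarrow> real) \<Rightarrow> bool" where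
  "scale_le w e h \<longleftrightarrow> (\<exists>L::real. ((\<lambda>n. e n / h n) \<longlongrightarrow> L) w)"

definition scale_equiv :: "nat filter \<Rightarrow> (nat \<Rightarrow> real) \<Rightarrow> (nat \<Rightarrow> real) \<Rightarrow> bool" where
  "scale_equiv w e h \<longleftrightarrow> (\<exists>L::real. L > 0 \<and> ((\<lambda>n. e n / h n) \<longlongrightarrow> L) w)"

definition scale_less :: "nat filter \<Rightarrow> (nat \<Rightarrow> real) \<Rightarrow> (nat \<Rightarrow> real) \<Rightarrow> bool" where
  "scale_less w e h \<longleftrightarrow> scale_le w e h \<and> \<not> scale_equiv w e h"

definition admissible :: "nat filter \<Rightarrow> (nat \<Rightarrow> real) \<Rightarrow> (nat \<Rightarrow> complex) set" where
  "admissible w e = {z. \<exists>L::real. ((\<lambda>n. cmod (z n) powr e n) \<longlongrightarrow> L) w}"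

definition negligible :: "nat filter \<Rightarrow> (nat \<Rightarrow> real) \<Rightarrow> (nat \<Rightarrow> complex) set" where
  "negligible w e = {z. ((\<lambda>n. cmod (z n) powr e n) \<longlongrightarrow> 0) w}"

definition val_ring :: "nat filter \<Rightarrow> (nat \<Rightarrow> real) \<Rightarrow> (nat \<Rightarrow> complex) set" where
  "val_ring w e = {z. z \<in> admissible w e \<and>
     (\<exists>L::real. L \<le> 1 \<and> ((\<lambda>n. cmod (z n) powr min 1 (e n)) \<longlongrightarrow> L) w)}"

definition max_ideal :: "nat filter \<Rightarrow> (nat \<Rightarrow> real) \<Rightarrow> (nat \<Rightarrow> complex) set" where
  "max_ideal w e = {z. z \<in> admissible w e \<and>
     (\<exists>L::real. L < 1 \<and> ((\<lambda>n. cmod (z n) powr min 1 (e n)) \<longlongrightarrow> L) w)}"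

text \<open>phi identifies the field 'k with the quotient ring A/N: phi is a surjective
  unital ring homomorphism from A (pointwise operations) onto 'k with kernel N.
  Any such 'k is isomorphic to A/N, so quantifying over all of them is the same as
  working in A/N.\<close>
definition quotient_map ::
  "(nat \<Rightarrow> complex) set \<Rightarrow> (nat \<Rightarrow> complex) set \<Rightarrow> ((nat \<Rightarrow> complex) \<Rightarrow> 'k::field) \<Rightarrow> bool" where
  "quotient_map A N phi \<longleftrightarrow>
     (\<forall>z\<in>A. \<forall>u\<in>A. phi (\<lambda>n. z n + u n) = phi z + phi u \<and> phi (\<lambda>n. z n * u n) = phi z * phi u)
     \<and> phi (\<lambda>n. 1) = 1 \<and> phi ` A = UNIV \<and> (\<forall>z\<in>A. phi z = 0 \<longleftrightarrow> z \<in> N)"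

text \<open>A binary form of formal degree N over a field is represented by the univariate
  polynomial f with degree f \<le> N: F(X,Y) = sum_{i\<le>N} coeff f i X^i Y^(N-i).
  A point of P^1 is a nonzero pair (a,b), i.e. [a:b]; infinity is [1:0].\<close>
definition form_eval :: "nat \<Rightarrow> 'a::comm_ring_1 poly \<Rightarrow> 'a \<times> 'a \<Rightarrow> 'a" where
  "form_eval N f x = (\<Sum>i\<le>N. coeff f i * fst x ^ i * snd x ^ (N - i))"

definition form_ord :: "nat \<Rightarrow> 'a::field poly \<Rightarrow> 'a \<times> 'a \<Rightarrow> nat" where
  "form_ord N f x = (if snd x \<noteq> 0 then order (fst x / snd x) f else N - degree f)"

definition rat_map :: "nat \<Rightarrow> 'a::field poly \<Rightarrow> 'a poly \<Rightarrow> bool" where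
  "rat_map N p q \<longleftrightarrow> coprime p q \<and> max (degree p) (degree q) = N"

text \<open>Local degree of g = [P:Q] at x: multiplicity of x in the fibre g^{-1}(g(x)),
  the zero divisor of Q(x) P - P(x) Q.\<close>
definition local_deg :: "nat \<Rightarrow> 'a::field poly \<Rightarrow> 'a poly \<Rightarrow> 'a \<times> 'a \<Rightarrow> nat" where
  "local_deg N p q x = form_ord N (smult (form_eval N q x) p - smult (form_eval N p x) q) x"

definition crit_div :: "nat \<Rightarrow> 'a::field poly \<Rightarrow> 'a poly \<Rightarrow> 'a \<times> 'a \<Rightarrow> int" where
  "crit_div N p q x = int (local_deg N p q x) - 1"

definition normalized_pair :: "nat \<Rightarrow> complex poly \<Rightarrow> complex poly \<Rightarrow> bool" where
  "normalized_pair N p q \<longleftrightarrow> degree p \<le> N \<and> degree q \<le> N \<and>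
     Max ((\<lambda>i. max (cmod (coeff p i)) (cmod (coeff q i))) ` {..N}) = 1"

definition normalized_form :: "nat \<Rightarrow> complex poly \<Rightarrow> bool" where
  "normalized_form N f \<longleftrightarrow> degree f \<le> N \<and> Max ((\<lambda>i. cmod (coeff f i)) ` {..N}) = 1"

definition lim_form :: "((nat \<Rightarrow> complex) \<Rightarrow> 'k::field) \<Rightarrow> nat \<Rightarrow> (nat \<Rightarrow> complex poly) \<Rightarrow> 'k poly" where
  "lim_form phi N F = (\<Sum>i\<le>N. monom (phi (\<lambda>n. coeff (F n) i)) i)"

text \<open>The conclusion over the limit field given by phi: for the factorisation
  P_lim = H Phat, Q_lim = H Qhat with H = gcd (degree k) and Phat, Qhat coprime of
  degree e (so f_lim = [Phat:Qhat], D(f) = zero divisor of H), and f_lim nonconstant,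
  the limit of the critical divisors equals C(f_lim) + 2 D(f).\<close>
definition crit_limit_formula ::
  "((nat \<Rightarrow> complex) \<Rightarrow> 'k::field) \<Rightarrow> nat \<Rightarrow> (nat \<Rightarrow> complex poly) \<Rightarrow> (nat \<Rightarrow> complex poly)
     \<Rightarrow> (nat \<Rightarrow> complex poly) \<Rightarrow> bool" where
  "crit_limit_formula phi d P Q F \<longleftrightarrow>
     (\<forall>k e h ph qh. k + e = d \<and> degree h \<le> k \<and>
        lim_form phi d P = h * ph \<and> lim_form phi d Q = h * qh \<and> rat_map e ph qh \<and> e \<ge> 1
      \<longrightarrow> (\<forall>x. x \<noteq> (0, 0) \<longrightarrow>
             int (form_ord (2 * d - 2) (lim_form phi (2 * d - 2) F) x)
               = crit_div e ph qh x + 2 * int (form_ord k h x)))"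

end

theory Submission
  imports Defs "HOL-Computational_Algebra.Fundamental_Theorem_Algebra"
begin

(* For a rational map g = [p : q] of degree N over a field of characteristic 0, the
   critical divisor C(g) is the divisor of the Wronskian p' q - p q', a binary form of
   degree 2N - 2.  Hence F_n = lam_n W(P_n, Q_n) for scalars lam_n.  Passing to the limit
   coefficientwise is a ring homomorphism on bounded sequences commuting with derivation,
   so W(P_n, Q_n) tends to W(h Phat, h Qhat) = h^2 W(Phat, Qhat).  Since F_n is normalised,
   lam_n lies in the domain of the limit map and has a nonzero limit; so the limit of F_n
   is a nonzero multiple of h^2 W(Phat, Qhat), whose divisor is 2 D(f) + C(f_lim). *)

section \<open>Wronskians\<close>

definition wronskian :: "'a::idom poly \<Rightarrow> 'a poly \<Rightarrow> 'a poly" where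
  "wronskian p q = pderiv p * q - p * pderiv q"

lemma wronskian_mult_common:
  fixes h p q :: "'a::idom poly"
  shows "wronskian (h * p) (h * q) = h ^ 2 * wronskian p q"
  by (simp add: wronskian_def pderiv_mult power2_eq_square algebra_simps)

lemma wronskian_lincomb_first:
  fixes p q :: "'a::idom poly"
  shows "wronskian (smult a p - smult b q) p = smult b (wronskian p q)"
  by (simp add: wronskian_def pderiv_diff pderiv_smult smult_diff_right algebra_simps)

lemma wronskian_lincomb_second:
  fixes p q :: "'a::idom poly"
  shows "wronskian (smult a p - smult b q) q = smult a (wronskian p q)"
  by (simp add: wronskian_def pderiv_diff pderiv_smult smult_diff_right algebra_simps)

(* If G = (X - t)^m R with m >= 1 and R(t) <> 0, then
   wronskian G r = (X - t)^(m - 1) (m R r + (X - t) wronskian R r),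
   and the second factor does not vanish at t in characteristic 0. *)
lemma order_wronskian:
  fixes G r :: "'a::field poly"
  assumes char: "CHAR('a) = 0" and "G \<noteq> 0" and "poly G t = 0" and "poly r t \<noteq> 0"
  shows "wronskian G r \<noteq> 0" and "order t (wronskian G r) = order t G - 1"
proof -
  define X where "X = [:-t, 1:]"
  obtain R where G: "G = X ^ order t G * R" and "\<not> X dvd R"
    using order_decomp[OF \<open>G \<noteq> 0\<close>] unfolding X_def by blast
  then have R_t: "poly R t \<noteq> 0" by (simp add: X_def poly_eq_0_iff_dvd)
  obtain k where k: "order t G = Suc k"
    using assms(2,3) order_root by (metis not0_implies_Suc)
  define S where "S = smult (of_nat (Suc k)) R * r + X * wronskian R r"
  have "pderiv X = 1" by (simp add: X_def pderiv_pCons)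
  then have W: "wronskian G r = X ^ k * S"
    by (subst G, unfold k)
      (simp add: S_def wronskian_def pderiv_mult pderiv_power_Suc algebra_simps del: power_Suc,
       simp add: power_Suc2 algebra_simps del: power_Suc)
  have S_t: "poly S t \<noteq> 0"
    using R_t assms(4) char by (simp add: S_def X_def of_nat_eq_0_iff_char_dvd del: of_nat_Suc)
  then show "wronskian G r \<noteq> 0" unfolding W by (auto simp: X_def)
  have "order t (wronskian G r) = k + order t S"
    using S_t unfolding W X_def by (subst order_mult) (auto simp: order_power_n_n)
  then show "order t (wronskian G r) = order t G - 1"
    using order_0I[OF S_t] k by simp
qed

lemma coeff_mult_at_degree_bounds:
  fixes p q :: "'a::idom poly"
  assumes "degree p \<le> a" and "degree q \<le> b"
  shows "coeff (p * q) (a + b) = coeff p a * coeff q b"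
proof (cases "degree p = a \<and> degree q = b")
  case True
  then show ?thesis using coeff_mult_degree_sum by metis
next
  case False
  then have "degree (p * q) < a + b"
    using assms degree_mult_le[of p q] by linarith
  moreover have "coeff p a = 0 \<or> coeff q b = 0"
    using False assms by (auto simp: coeff_eq_0)
  ultimately show ?thesis by (auto simp: coeff_eq_0)
qed

lemma degree_pderiv_le: "degree (pderiv p) \<le> degree p - 1"
  by (rule degree_le) (auto simp: coeff_pderiv coeff_eq_0)

lemma coeff_pderiv_mult_at_degree_bounds:
  fixes p q :: "'a::idom poly"
  assumes "degree p \<le> a" and "degree q \<le> b" and "a + b \<ge> 1"
  shows "coeff (pderiv p * q) (a + b - 1) = of_nat a * coeff p a * coeff q b"
proof (cases a)
  case 0
  then have "pderiv p = 0" using assms(1) by (auto elim: degree_eq_zeroE)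
  then show ?thesis using 0 by simp
next
  case (Suc a')
  have "degree (pderiv p) \<le> a'"
    using assms(1) Suc degree_pderiv_le[of p] by linarith
  then show ?thesis
    using coeff_mult_at_degree_bounds[OF _ assms(2)] Suc by (simp add: coeff_pderiv)
qed

lemma coeff_wronskian_at_degree_bounds:
  fixes p q :: "'a::idom poly"
  assumes "degree p \<le> a" and "degree q \<le> b" and "a + b \<ge> 1"
  shows "coeff (wronskian p q) (a + b - 1) = (of_nat a - of_nat b) * coeff p a * coeff q b"
proof -
  have "coeff (pderiv q * p) (b + a - 1) = of_nat b * coeff q b * coeff p a"
    using assms by (intro coeff_pderiv_mult_at_degree_bounds) auto
  then have "coeff (p * pderiv q) (a + b - 1) = of_nat b * coeff p a * coeff q b"
    by (simp add: ac_simps)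
  then show ?thesis
    using coeff_pderiv_mult_at_degree_bounds[OF assms]
    by (simp add: wronskian_def algebra_simps)
qed

lemma degree_wronskian_le:
  fixes p q :: "'a::idom poly"
  shows "degree (wronskian p q) \<le> degree p + degree q - 1"
proof -
  have pderiv_mult: "degree (pderiv p * q) \<le> degree p + degree q - 1" for p q :: "'a poly"
  proof (cases "degree p = 0")
    case True
    then show ?thesis by (auto elim: degree_eq_zeroE)
  next
    case False
    then show ?thesis using degree_mult_le[of "pderiv p" q] degree_pderiv_le[of p] by linarith
  qed
  have "degree (p * pderiv q) \<le> degree p + degree q - 1"
    using pderiv_mult[of q p] by (simp add: ac_simps)
  with pderiv_mult[of p q] show ?thesis
    unfolding wronskian_def by (intro degree_diff_le)
qed

lemma degree_wronskian:
  fixes G r :: "'a::field poly"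
  assumes char: "CHAR('a) = 0" and "G \<noteq> 0" and "degree G < degree r"
  shows "wronskian G r \<noteq> 0" and "degree (wronskian G r) = degree r + degree G - 1"
proof -
  have "of_nat (degree r - degree G) \<noteq> (0::'a)"
    unfolding of_nat_eq_0_iff_char_dvd using assms(3) char by simp
  moreover have "of_nat (degree G) - of_nat (degree r) = - (of_nat (degree r - degree G) :: 'a)"
    using assms(3) by (simp add: of_nat_diff)
  ultimately have "of_nat (degree G) - of_nat (degree r) \<noteq> (0::'a)" by simp
  then have top: "coeff (wronskian G r) (degree G + degree r - 1) \<noteq> 0"
    using assms(2,3) by (subst coeff_wronskian_at_degree_bounds) auto
  then show "wronskian G r \<noteq> 0" by auto
  show "degree (wronskian G r) = degree r + degree G - 1"
    using le_degree[OF top] degree_wronskian_le[of G r] by simp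
qed

section \<open>The critical divisor is the divisor of the Wronskian\<close>

lemma form_eval_finite:
  fixes f :: "'a::field poly"
  assumes "degree f \<le> N" and "b \<noteq> 0"
  shows "form_eval N f (a, b) = b ^ N * poly f (a / b)"
proof -
  have "poly f (a / b) = (\<Sum>i\<le>N. coeff f i * (a / b) ^ i)"
    unfolding poly_altdef using assms(1) by (intro sum.mono_neutral_left) (auto simp: coeff_eq_0)
  then have "b ^ N * poly f (a / b) = (\<Sum>i\<le>N. b ^ N * (coeff f i * (a / b) ^ i))"
    by (simp add: sum_distrib_left)
  also have "\<dots> = (\<Sum>i\<le>N. coeff f i * a ^ i * b ^ (N - i))"
  proof (rule sum.cong)
    fix i assume "i \<in> {..N}"
    then have "b ^ N = b ^ i * b ^ (N - i)" by (simp flip: power_add)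
    then show "b ^ N * (coeff f i * (a / b) ^ i) = coeff f i * a ^ i * b ^ (N - i)"
      using assms(2) by (simp add: power_divide field_simps)
  qed simp
  finally show ?thesis by (simp add: form_eval_def)
qed

lemma form_eval_infinity:
  fixes f :: "'a::field poly"
  shows "form_eval N f (a, 0) = coeff f N * a ^ N"
proof -
  have "(\<Sum>i\<le>N. coeff f i * a ^ i * 0 ^ (N - i)) = (\<Sum>i\<in>{N}. coeff f i * a ^ i * 0 ^ (N - i))"
    by (rule sum.mono_neutral_right) auto
  then show ?thesis by (simp add: form_eval_def)
qed

lemma local_deg_finite:
  fixes p q :: "'a::field poly"
  assumes "degree p \<le> N" and "degree q \<le> N" and "b \<noteq> 0"
  shows "local_deg N p q (a, b) = order (a / b) (smult (poly q (a / b)) p - smult (poly p (a / b)) q)"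
proof -
  have "smult (form_eval N q (a, b)) p - smult (form_eval N p (a, b)) q
      = smult (b ^ N) (smult (poly q (a / b)) p - smult (poly p (a / b)) q)"
    using assms by (simp add: form_eval_finite smult_diff_right)
  then show ?thesis using assms(3) by (simp add: local_deg_def form_ord_def order_smult)
qed

lemma local_deg_infinity:
  fixes p q :: "'a::field poly"
  assumes "a \<noteq> 0"
  shows "local_deg N p q (a, 0) = N - degree (smult (coeff q N) p - smult (coeff p N) q)"
proof -
  have "smult (form_eval N q (a, 0)) p - smult (form_eval N p (a, 0)) q
      = smult (a ^ N) (smult (coeff q N) p - smult (coeff p N) q)"
    by (simp add: form_eval_infinity smult_diff_right mult.commute)
  then show ?thesis using assms by (simp add: local_deg_def form_ord_def)
qed

lemma form_ord_smult: "c \<noteq> 0 \<Longrightarrow> form_ord N (smult c f) x = form_ord N f x"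
  by (simp add: form_ord_def order_smult)

lemma form_ord_mult:
  fixes f g :: "'a::field poly"
  assumes "f \<noteq> 0" and "g \<noteq> 0" and "degree f \<le> M" and "degree g \<le> N"
  shows "form_ord (M + N) (f * g) x = form_ord M f x + form_ord N g x"
  using assms by (simp add: form_ord_def order_mult degree_mult_eq)

lemma coprime_smult_eq_smult_imp_constant:
  fixes p q :: "'a::field poly"
  assumes "coprime p q" and "smult a p = smult b q" and "a \<noteq> 0"
  shows "degree p = 0 \<and> degree q = 0"
proof -
  have "p = smult (inverse a) (smult a p)" using assms(3) by simp
  also have "\<dots> = smult (b / a) q" using assms(2) by (simp add: divide_inverse mult.commute)
  finally have p: "p = smult (b / a) q" .
  have "q dvd p" unfolding p by (rule dvd_smult[OF dvd_refl])
  then have "is_unit q" using coprime_common_divisor[OF assms(1)] by simp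
  then have "degree q = 0" by (metis is_unit_iff_degree not_is_unit_0)
  moreover have "degree p \<le> degree q" using p by simp
  ultimately show ?thesis by simp
qed

lemma rat_map_not_proportional:
  fixes p q :: "'a::field poly"
  assumes "rat_map N p q" and "N \<ge> 1" and "smult a p = smult b q"
  shows "a = 0 \<and> b = 0"
proof (rule ccontr)
  assume "\<not> (a = 0 \<and> b = 0)"
  then have "degree p = 0 \<and> degree q = 0"
    using coprime_smult_eq_smult_imp_constant[of p q a b]
      coprime_smult_eq_smult_imp_constant[of q p b a] assms(1,3)
    by (auto simp: rat_map_def coprime_commute)
  then show False using assms(1,2) by (simp add: rat_map_def)
qed

(* Up to a nonzero scalar, smult (poly q t) p - smult (poly p t) q is the form cutting out the
   fibre of [p : q] through t (local_deg_finite), and smult (coeff q N) p - smult (coeff p N) q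
   the one through infinity (local_deg_infinity). *)
lemma rat_map_fibre_finite_nonzero:
  fixes p q :: "'a::field poly"
  assumes "rat_map N p q" and "N \<ge> 1"
  shows "smult (poly q t) p - smult (poly p t) q \<noteq> 0"
proof
  assume "smult (poly q t) p - smult (poly p t) q = 0"
  then have "poly q t = 0 \<and> poly p t = 0"
    using rat_map_not_proportional[OF assms, of "poly q t" "poly p t"] by simp
  then show False using coprime_poly_0[of p q t] assms(1) by (auto simp: rat_map_def)
qed

lemma rat_map_fibre_infinity:
  fixes p q :: "'a::field poly"
  assumes "rat_map N p q" and "N \<ge> 1"
  shows "smult (coeff q N) p - smult (coeff p N) q \<noteq> 0"
    and "degree (smult (coeff q N) p - smult (coeff p N) q) < N"
proof -
  let ?G = "smult (coeff q N) p - smult (coeff p N) q"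
  have deg: "degree p \<le> N" "degree q \<le> N" "degree p = N \<or> degree q = N"
    using assms(1) by (auto simp: rat_map_def max_def)
  then have "coeff p N \<noteq> 0 \<or> coeff q N \<noteq> 0"
    using assms(2) by (metis leading_coeff_0_iff degree_0 not_one_le_zero)
  then show G: "?G \<noteq> 0"
    using rat_map_not_proportional[OF assms, of "coeff q N" "coeff p N"] by auto
  have "degree ?G \<le> N" using deg by (intro degree_diff_le) auto
  moreover have "coeff ?G N = 0" by simp
  ultimately show "degree ?G < N" using G by (metis le_neq_implies_less leading_coeff_0_iff)
qed

lemma degree_wronskian_rat_map:
  fixes p q :: "'a::field poly"
  assumes char: "CHAR('a) = 0" and rm: "rat_map N p q" and "N \<ge> 1"
  shows "wronskian p q \<noteq> 0"
    and "degree (wronskian p q) = N + degree (smult (coeff q N) p - smult (coeff p N) q) - 1"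
proof -
  let ?G = "smult (coeff q N) p - smult (coeff p N) q"
  obtain c r where "c \<noteq> 0" and "degree r = N" and W: "smult c (wronskian p q) = wronskian ?G r"
  proof (cases "degree q = N")
    case True
    then have "coeff q N \<noteq> 0" using assms(3) by (metis leading_coeff_0_iff degree_0 not_one_le_zero)
    then show ?thesis by (rule that[of _ q]) (simp_all add: True wronskian_lincomb_second)
  next
    case False
    then have "degree p = N" using rm by (auto simp: rat_map_def max_def split: if_splits)
    then have "coeff p N \<noteq> 0" using assms(3) by (metis leading_coeff_0_iff degree_0 not_one_le_zero)
    then show ?thesis by (rule that[of _ p]) (simp_all add: \<open>degree p = N\<close> wronskian_lincomb_first)
  qed
  have G: "?G \<noteq> 0" "degree ?G < degree r"
    using rat_map_fibre_infinity[OF rm \<open>N \<ge> 1\<close>] \<open>degree r = N\<close> by simp_all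
  show "wronskian p q \<noteq> 0"
    using degree_wronskian(1)[OF char G] W by auto
  have "degree (wronskian p q) = degree (smult c (wronskian p q))" using \<open>c \<noteq> 0\<close> by simp
  also have "\<dots> = N + degree ?G - 1" using degree_wronskian(2)[OF char G] W \<open>degree r = N\<close> by simp
  finally show "degree (wronskian p q) = N + degree ?G - 1" .
qed

lemma degree_wronskian_rat_map_le:
  fixes p q :: "'a::field poly"
  assumes "CHAR('a) = 0" and "rat_map N p q" and "N \<ge> 1"
  shows "degree (wronskian p q) \<le> 2 * N - 2"
  using degree_wronskian_rat_map(2)[OF assms] rat_map_fibre_infinity(2)[OF assms(2,3)] by simp

lemma order_wronskian_rat_map:
  fixes p q :: "'a::field poly"
  assumes char: "CHAR('a) = 0" and rm: "rat_map N p q" and "N \<ge> 1"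
  shows "order t (wronskian p q) = order t (smult (poly q t) p - smult (poly p t) q) - 1"
proof -
  let ?G = "smult (poly q t) p - smult (poly p t) q"
  have G: "?G \<noteq> 0" "poly ?G t = 0"
    using rat_map_fibre_finite_nonzero[OF rm \<open>N \<ge> 1\<close>] by auto
  obtain c r where "c \<noteq> 0" and "poly r t \<noteq> 0" and W: "smult c (wronskian p q) = wronskian ?G r"
  proof (cases "poly q t = 0")
    case False
    then show ?thesis by (rule that[of _ q]) (simp_all add: False wronskian_lincomb_second)
  next
    case True
    then have "poly p t \<noteq> 0" using coprime_poly_0[of p q t] rm by (auto simp: rat_map_def)
    then show ?thesis by (rule that[of _ p]) (simp_all add: \<open>poly p t \<noteq> 0\<close> wronskian_lincomb_first)
  qed
  have "order t (wronskian p q) = order t (smult c (wronskian p q))"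
    using \<open>c \<noteq> 0\<close> by (simp add: order_smult)
  also have "\<dots> = order t ?G - 1"
    unfolding W by (rule order_wronskian(2)[OF char G \<open>poly r t \<noteq> 0\<close>])
  finally show ?thesis .
qed

lemma crit_div_eq_form_ord_wronskian:
  fixes p q :: "'a::field poly"
  assumes char: "CHAR('a) = 0" and rm: "rat_map N p q" and "N \<ge> 1" and "x \<noteq> (0, 0)"
  shows "int (form_ord (2 * N - 2) (wronskian p q) x) = crit_div N p q x"
proof -
  obtain a b where x: "x = (a, b)" by fastforce
  have deg: "degree p \<le> N" "degree q \<le> N" using rm by (auto simp: rat_map_def)
  show ?thesis
  proof (cases "b = 0")
    case True
    then have "a \<noteq> 0" using assms(4) x by simp
    then show ?thesis
      using True x local_deg_infinity[OF \<open>a \<noteq> 0\<close>, of N p q] degree_wronskian_rat_map(2)[OF assms(1-3)]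
        rat_map_fibre_infinity(2)[OF rm \<open>N \<ge> 1\<close>]
      by (simp add: crit_div_def form_ord_def)
  next
    case False
    let ?G = "smult (poly q (a / b)) p - smult (poly p (a / b)) q"
    have "?G \<noteq> 0" by (rule rat_map_fibre_finite_nonzero[OF rm \<open>N \<ge> 1\<close>])
    then have "order (a / b) ?G \<noteq> 0" using order_root[of ?G "a / b"] by simp
    then show ?thesis
      using False x local_deg_finite[OF deg False] order_wronskian_rat_map[OF assms(1-3)]
      by (simp add: crit_div_def form_ord_def)
  qed
qed

lemma complex_poly_eq_smult_if_order_eq:
  fixes p q :: "complex poly"
  assumes "p \<noteq> 0" and "q \<noteq> 0" and "\<And>t. order t p = order t q"
  shows "p = smult (lead_coeff p / lead_coeff q) q"
proof -
  have roots: "{t. poly p t = 0} = {t. poly q t = 0}"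
    using assms by (auto simp: order_root)
  define R where "R = (\<Prod>t | poly q t = 0. [:-t, 1:] ^ order t q)"
  have p: "p = smult (lead_coeff p) R"
    using complex_poly_decompose[of p] unfolding R_def roots assms(3) by simp
  have q: "q = smult (lead_coeff q) R"
    using complex_poly_decompose[of q] unfolding R_def by simp
  have "smult (lead_coeff p / lead_coeff q) q = smult (lead_coeff p) R"
    using assms(2) by (subst q) simp
  with p show ?thesis by simp
qed

lemma complex_form_eq_smult_wronskian:
  fixes p q f :: "complex poly"
  assumes "rat_map d p q" and "d \<ge> 1" and "f \<noteq> 0"
    and "\<And>x. x \<noteq> (0, 0) \<Longrightarrow> int (form_ord (2 * d - 2) f x) = crit_div d p q x"
  shows "\<exists>c. f = smult c (wronskian p q)"
proof -
  have "order t f = order t (wronskian p q)" for t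
    using assms(4)[of "(t, 1)"] crit_div_eq_form_ord_wronskian[OF _ assms(1,2), of "(t, 1)"]
    by (simp add: form_ord_def)
  then show ?thesis
    using complex_poly_eq_smult_if_order_eq[OF assms(3) degree_wronskian_rat_map(1)[OF _ assms(1,2)]]
    by auto
qed

section \<open>Limits along a free ultrafilter\<close>

lemma free_ultrafilter_tendsto_compact:
  fixes f :: "nat \<Rightarrow> 'a::topological_space"
  assumes uf: "free_ultrafilter w" and "compact S" and "eventually (\<lambda>n. f n \<in> S) w"
  shows "\<exists>L\<in>S. (f \<longlongrightarrow> L) w"
proof -
  have "filtermap f w \<noteq> bot" and "eventually (\<lambda>x. x \<in> S) (filtermap f w)"
    using uf assms(3) by (auto simp: free_ultrafilter_def eventually_filtermap filtermap_bot_iff)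
  then obtain L where "L \<in> S" and L: "inf (nhds L) (filtermap f w) \<noteq> bot"
    using \<open>compact S\<close> unfolding compact_filter by blast
  have "(f \<longlongrightarrow> L) w"
  proof (rule topological_tendstoI)
    fix U assume "open U" and "L \<in> U"
    show "eventually (\<lambda>n. f n \<in> U) w"
    proof (rule ccontr)
      assume "\<not> eventually (\<lambda>n. f n \<in> U) w"
      then have "eventually (\<lambda>x. x \<notin> U) (filtermap f w)"
        using uf by (auto simp: free_ultrafilter_def eventually_filtermap)
      moreover have "eventually (\<lambda>x. x \<in> U) (nhds L)"
        using \<open>open U\<close> \<open>L \<in> U\<close> by (rule eventually_nhds_in_open)
      ultimately have "eventually (\<lambda>x. False) (inf (nhds L) (filtermap f w))"
        unfolding eventually_inf by blast
      with L show False by (simp add: eventually_False)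
    qed
  qed
  with \<open>L \<in> S\<close> show ?thesis by blast
qed

lemma free_ultrafilter_tendsto_bounded:
  fixes f :: "nat \<Rightarrow> real"
  assumes "free_ultrafilter w" and "eventually (\<lambda>n. a \<le> f n \<and> f n \<le> b) w"
  shows "\<exists>L. (f \<longlongrightarrow> L) w"
  using free_ultrafilter_tendsto_compact[OF assms(1) compact_Icc, of f a b] assms(2) by auto

lemma free_ultrafilter_eventually_ex_finite:
  assumes uf: "free_ultrafilter w" and "finite I" and "eventually (\<lambda>n. \<exists>i\<in>I. P i n) w"
  shows "\<exists>i\<in>I. eventually (P i) w"
proof (rule ccontr)
  assume "\<not> ?thesis"
  then have "\<forall>i\<in>I. eventually (\<lambda>n. \<not> P i n) w" using uf by (auto simp: free_ultrafilter_def)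
  then have "eventually (\<lambda>n. \<forall>i\<in>I. \<not> P i n) w" using \<open>finite I\<close> by (simp add: eventually_ball_finite)
  with assms(3) have "eventually (\<lambda>n. False) w" by eventually_elim auto
  with uf show False by (simp add: free_ultrafilter_def eventually_False)
qed

lemma Bseq_powr_tendsto:
  fixes z :: "nat \<Rightarrow> 'a::real_normed_vector"
  assumes "free_ultrafilter w" and "Bseq z" and "\<And>n. 0 \<le> s n" and "\<And>n. s n \<le> B"
  shows "\<exists>L. ((\<lambda>n. norm (z n) powr s n) \<longlongrightarrow> L) w"
proof -
  obtain K where K: "\<And>n. norm (z n) \<le> K" using BseqD[OF \<open>Bseq z\<close>] by auto
  have "norm (z n) powr s n \<le> max 1 K powr B" for n
  proof -
    have "norm (z n) powr s n \<le> max 1 K powr s n"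
      using K[of n] assms(3) by (intro powr_mono2) auto
    also have "\<dots> \<le> max 1 K powr B" using assms(4) by (intro powr_mono) auto
    finally show ?thesis .
  qed
  then show ?thesis
    by (intro free_ultrafilter_tendsto_bounded[OF assms(1), where a = 0] always_eventually) auto
qed

lemma Bseq_powr_limit_le_1:
  fixes z :: "nat \<Rightarrow> 'a::real_normed_vector"
  assumes "w \<noteq> bot" and "Bseq z" and "(s \<longlongrightarrow> 0) w" and "\<And>n. 0 \<le> s n"
    and lim: "((\<lambda>n. norm (z n) powr s n) \<longlongrightarrow> L) w"
  shows "L \<le> 1"
proof -
  obtain K where "K > 0" and K: "\<And>n. norm (z n) \<le> K" using BseqD[OF \<open>Bseq z\<close>] by auto
  have "((\<lambda>n. max 1 K powr s n) \<longlongrightarrow> max 1 K powr 0) w"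
    by (intro tendsto_powr tendsto_const assms(3)) auto
  moreover have "eventually (\<lambda>n. norm (z n) powr s n \<le> max 1 K powr s n) w"
    using K assms(4) by (intro always_eventually allI powr_mono2) (auto simp: le_max_iff_disj)
  ultimately have "L \<le> max 1 K powr 0" using assms(1) by (intro tendsto_le[OF _ _ lim])
  then show ?thesis by (simp add: max_def split: if_splits)
qed

lemma tendsto_powr_ge_1:
  fixes x s :: "nat \<Rightarrow> real"
  assumes "w \<noteq> bot" and "((\<lambda>n. x n powr s n) \<longlongrightarrow> L) w"
    and "eventually (\<lambda>n. 1 \<le> x n) w" and "\<And>n. 0 \<le> s n"
  shows "1 \<le> L"
proof -
  have "eventually (\<lambda>n. 1 \<le> x n powr s n) w"
    using assms(3) by eventually_elim (simp add: assms(4) ge_one_powr_ge_zero)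
  with assms(1,2) show ?thesis by (intro tendsto_lowerbound)
qed

lemma tendsto_powr_reciprocal_bound:
  fixes x y s :: "nat \<Rightarrow> real"
  assumes uf: "free_ultrafilter w" and "\<And>n. 0 \<le> x n" and "\<And>n. 0 \<le> y n" and "\<And>n. 0 \<le> s n"
    and "\<And>n. y n * x n \<le> 1"
    and lim: "((\<lambda>n. x n powr s n) \<longlongrightarrow> L) w" and "L > 0"
  shows "\<exists>L'. ((\<lambda>n. y n powr s n) \<longlongrightarrow> L') w \<and> L' \<le> 1 / L"
proof -
  have prod: "y n powr s n * x n powr s n \<le> 1" for n
  proof -
    have "y n powr s n * x n powr s n = (y n * x n) powr s n"
      using assms(2,3) by (simp add: powr_mult)
    also have "\<dots> \<le> 1 powr s n" using assms(2-5) by (intro powr_mono2) auto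
    finally show ?thesis by simp
  qed
  have "L / 2 < L" using \<open>L > 0\<close> by simp
  from order_tendstoD(1)[OF lim this]
  have "eventually (\<lambda>n. L / 2 < x n powr s n) w" .
  then have ev: "eventually (\<lambda>n. 0 \<le> y n powr s n \<and> y n powr s n \<le> 2 / L
      \<and> y n powr s n \<le> 1 / x n powr s n) w"
  proof eventually_elim
    case (elim n)
    let ?X = "x n powr s n" and ?Y = "y n powr s n"
    have X: "0 < ?X" using elim \<open>L > 0\<close> by linarith
    have "?Y \<le> 1 / ?X" using prod[of n] X by (simp add: field_simps)
    moreover have "1 / ?X \<le> 2 / L" using elim \<open>L > 0\<close> X by (simp add: field_simps)
    ultimately show ?case by simp
  qed
  then have "eventually (\<lambda>n. 0 \<le> y n powr s n \<and> y n powr s n \<le> 2 / L) w"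
    by (rule eventually_mono) simp
  from free_ultrafilter_tendsto_bounded[OF uf this]
  obtain L' where L': "((\<lambda>n. y n powr s n) \<longlongrightarrow> L') w" by blast
  have "((\<lambda>n. 1 / x n powr s n) \<longlongrightarrow> 1 / L) w"
    using \<open>L > 0\<close> by (intro tendsto_divide lim) auto
  moreover have "w \<noteq> bot" using uf by (simp add: free_ultrafilter_def)
  ultimately have "L' \<le> 1 / L"
    using ev by (intro tendsto_le[OF _ _ L']) (auto elim: eventually_mono)
  with L' show ?thesis by blast
qed

lemma scale_less_1_tendsto_0:
  assumes "w \<noteq> bot" and "is_scale eta" and "scale_less w eta (\<lambda>n. 1)"
  shows "(eta \<longlongrightarrow> 0) w"
proof -
  obtain L where L: "(eta \<longlongrightarrow> L) w" and "\<not> L > 0"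
    using assms(3) unfolding scale_less_def scale_le_def scale_equiv_def by auto
  moreover have "L \<ge> 0"
    using assms(1,2) by (intro tendsto_lowerbound[OF L]) (auto simp: is_scale_def less_imp_le)
  ultimately show ?thesis by simp
qed

lemma val_ring_max_ideal_eq:
  assumes "eventually (\<lambda>n. eta n \<le> 1) w"
  shows "val_ring w eta = {z. \<exists>L\<le>1. ((\<lambda>n. cmod (z n) powr eta n) \<longlongrightarrow> L) w}"
    and "max_ideal w eta = {z. \<exists>L<1. ((\<lambda>n. cmod (z n) powr eta n) \<longlongrightarrow> L) w}"
proof -
  have "((\<lambda>n. cmod (z n) powr min 1 (eta n)) \<longlongrightarrow> L) w \<longleftrightarrow> ((\<lambda>n. cmod (z n) powr eta n) \<longlongrightarrow> L) w"
    for z :: "nat \<Rightarrow> complex" and L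
    using assms by (intro tendsto_cong) (auto elim: eventually_mono simp: min_def)
  then show "val_ring w eta = {z. \<exists>L\<le>1. ((\<lambda>n. cmod (z n) powr eta n) \<longlongrightarrow> L) w}"
    and "max_ideal w eta = {z. \<exists>L<1. ((\<lambda>n. cmod (z n) powr eta n) \<longlongrightarrow> L) w}"
    by (auto simp: val_ring_def max_ideal_def admissible_def)
qed

section \<open>Sequences of polynomials with bounded coefficients\<close>

lemma Bseq_plus:
  fixes f g :: "nat \<Rightarrow> 'a::real_normed_vector"
  shows "Bseq f \<Longrightarrow> Bseq g \<Longrightarrow> Bseq (\<lambda>n. f n + g n)"
  unfolding Bseq_eq_bounded by (rule bounded_plus_comp)

lemma Bseq_minus:
  fixes f g :: "nat \<Rightarrow> 'a::real_normed_vector"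
  shows "Bseq f \<Longrightarrow> Bseq g \<Longrightarrow> Bseq (\<lambda>n. f n - g n)"
  unfolding Bseq_eq_bounded by (rule bounded_minus_comp)

lemma Bseq_sum:
  fixes f :: "'i \<Rightarrow> nat \<Rightarrow> 'a::real_normed_vector"
  shows "finite I \<Longrightarrow> (\<And>i. i \<in> I \<Longrightarrow> Bseq (f i)) \<Longrightarrow> Bseq (\<lambda>n. \<Sum>i\<in>I. f i n)"
  by (induction I rule: finite_induct) (simp_all add: Bseq_plus)

definition bounded_coeffs :: "(nat \<Rightarrow> 'a::real_normed_vector poly) \<Rightarrow> bool" where
  "bounded_coeffs F \<longleftrightarrow> (\<forall>i. Bseq (\<lambda>n. coeff (F n) i))"

lemma bounded_coeffs_mult:
  fixes F G :: "nat \<Rightarrow> 'a::real_normed_field poly"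
  shows "bounded_coeffs F \<Longrightarrow> bounded_coeffs G \<Longrightarrow> bounded_coeffs (\<lambda>n. F n * G n)"
  unfolding bounded_coeffs_def coeff_mult by (auto intro!: Bseq_sum Bseq_mult)

lemma bounded_coeffs_diff:
  fixes F G :: "nat \<Rightarrow> 'a::real_normed_field poly"
  shows "bounded_coeffs F \<Longrightarrow> bounded_coeffs G \<Longrightarrow> bounded_coeffs (\<lambda>n. F n - G n)"
  unfolding bounded_coeffs_def by (auto intro!: Bseq_minus)

lemma bounded_coeffs_pderiv:
  fixes F :: "nat \<Rightarrow> 'a::real_normed_field poly"
  shows "bounded_coeffs F \<Longrightarrow> bounded_coeffs (\<lambda>n. pderiv (F n))"
  unfolding bounded_coeffs_def coeff_pderiv by (auto intro!: Bseq_mult)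

lemma normalized_pair_coeff_le_1:
  assumes "normalized_pair N p q"
  shows "cmod (coeff p i) \<le> 1" and "cmod (coeff q i) \<le> 1"
proof -
  let ?m = "\<lambda>i. max (cmod (coeff p i)) (cmod (coeff q i))"
  have "?m i \<le> 1"
  proof (cases "i \<le> N")
    case True
    then have "?m i \<le> Max (?m ` {..N})" by (intro Max_ge) auto
    then show ?thesis using assms by (simp add: normalized_pair_def)
  next
    case False
    then show ?thesis using assms by (simp add: normalized_pair_def coeff_eq_0)
  qed
  then show "cmod (coeff p i) \<le> 1" and "cmod (coeff q i) \<le> 1" by simp_all
qed

lemma normalized_pair_coeff_eq_1:
  assumes "normalized_pair N p q"
  shows "\<exists>i\<in>{..N}. cmod (coeff p i) = 1 \<or> cmod (coeff q i) = 1"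
proof -
  let ?m = "\<lambda>i. max (cmod (coeff p i)) (cmod (coeff q i))"
  have "Max (?m ` {..N}) \<in> ?m ` {..N}" by (intro Max_in) auto
  then show ?thesis using assms by (auto simp: normalized_pair_def max_def split: if_splits)
qed

lemma normalized_form_coeff_le_1:
  assumes "normalized_form N f"
  shows "cmod (coeff f i) \<le> 1"
proof (cases "i \<le> N")
  case True
  then have "cmod (coeff f i) \<le> Max ((\<lambda>i. cmod (coeff f i)) ` {..N})" by (intro Max_ge) auto
  then show ?thesis using assms by (simp add: normalized_form_def)
next
  case False
  then show ?thesis using assms by (simp add: normalized_form_def coeff_eq_0)
qed

lemma normalized_form_coeff_eq_1:
  assumes "normalized_form N f"
  shows "\<exists>i\<in>{..N}. cmod (coeff f i) = 1"
proof -
  have "Max ((\<lambda>i. cmod (coeff f i)) ` {..N}) \<in> (\<lambda>i. cmod (coeff f i)) ` {..N}" by (intro Max_in) auto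
  then obtain i where "Max ((\<lambda>i. cmod (coeff f i)) ` {..N}) = cmod (coeff f i)" and "i \<in> {..N}"
    by (rule imageE)
  then show ?thesis using assms by (auto simp: normalized_form_def)
qed

lemma normalized_pair_bounded_coeffs:
  assumes "\<And>n. normalized_pair N (P n) (Q n)"
  shows "bounded_coeffs P" and "bounded_coeffs Q"
proof -
  have "Bseq (\<lambda>n. coeff (P n) i)" "Bseq (\<lambda>n. coeff (Q n) i)" for i
    by (rule BseqI'[of _ 1], rule normalized_pair_coeff_le_1[OF assms])+
  then show "bounded_coeffs P" and "bounded_coeffs Q" by (simp_all add: bounded_coeffs_def)
qed

section \<open>Limit maps\<close>

(* The properties shared by the maps onto H_eta (A the admissible sequences) and onto its
   residue field (A the valuation ring) that the argument uses. *)
locale limit_map =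
  fixes w :: "nat filter" and A :: "(nat \<Rightarrow> complex) set"
    and phi :: "(nat \<Rightarrow> complex) \<Rightarrow> 'k::field"
  assumes ultrafilter: "free_ultrafilter w"
    and hom_add: "z \<in> A \<Longrightarrow> u \<in> A \<Longrightarrow> phi (\<lambda>n. z n + u n) = phi z + phi u"
    and hom_mult: "z \<in> A \<Longrightarrow> u \<in> A \<Longrightarrow> phi (\<lambda>n. z n * u n) = phi z * phi u"
    and hom_one: "phi (\<lambda>n. 1) = 1"
    and Bseq_in_domain: "Bseq z \<Longrightarrow> z \<in> A"
    and nonzero_if_eventually_ge_1: "Bseq z \<Longrightarrow> eventually (\<lambda>n. 1 \<le> cmod (z n)) w \<Longrightarrow> phi z \<noteq> 0"
    and in_domain_if_dominated:
      "Bseq z \<Longrightarrow> phi z \<noteq> 0 \<Longrightarrow> (\<And>n. cmod (u n) * cmod (z n) \<le> 1) \<Longrightarrow> u \<in> A"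

lemma limit_map_admissible:
  assumes uf: "free_ultrafilter w" and "is_scale eta"
    and qm: "quotient_map (admissible w eta) (negligible w eta) phi"
  shows "limit_map w (admissible w eta) phi"
proof -
  have "w \<noteq> bot" using uf by (simp add: free_ultrafilter_def)
  obtain B where eta: "\<And>n. 0 \<le> eta n" "\<And>n. eta n \<le> B"
    using \<open>is_scale eta\<close> by (auto simp: is_scale_def less_imp_le)
  have bounded: "z \<in> admissible w eta" if z: "Bseq z" for z
    unfolding admissible_def by (simp, rule Bseq_powr_tendsto[OF uf z]) (rule eta)+
  have kernel: "z \<in> admissible w eta \<Longrightarrow> phi z = 0 \<longleftrightarrow> z \<in> negligible w eta" for z
    using qm by (simp add: quotient_map_def)
  show ?thesis
  proof unfold_locales
    fix z assume "Bseq z" and ev: "eventually (\<lambda>n. 1 \<le> cmod (z n)) w"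
    show "phi z \<noteq> 0"
    proof
      assume "phi z = 0"
      then have "((\<lambda>n. cmod (z n) powr eta n) \<longlongrightarrow> 0) w"
        using kernel bounded[OF \<open>Bseq z\<close>] by (simp add: negligible_def)
      from tendsto_powr_ge_1[OF \<open>w \<noteq> bot\<close> this ev eta(1)] show False by simp
    qed
  next
    fix z u assume "Bseq z" and "phi z \<noteq> 0" and uz: "\<And>n. cmod (u n) * cmod (z n) \<le> 1"
    obtain L where L: "((\<lambda>n. cmod (z n) powr eta n) \<longlongrightarrow> L) w"
      using bounded[OF \<open>Bseq z\<close>] by (auto simp: admissible_def)
    have "L \<noteq> 0"
      using L kernel bounded[OF \<open>Bseq z\<close>] \<open>phi z \<noteq> 0\<close> by (auto simp: negligible_def)
    moreover have "L \<ge> 0"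
      using \<open>w \<noteq> bot\<close> by (intro tendsto_lowerbound[OF L]) auto
    ultimately obtain L' where "((\<lambda>n. cmod (u n) powr eta n) \<longlongrightarrow> L') w"
      using tendsto_powr_reciprocal_bound[OF uf _ _ eta(1) uz L] by fastforce
    then show "u \<in> admissible w eta" by (auto simp: admissible_def)
  qed (use uf qm bounded in \<open>simp_all add: quotient_map_def\<close>)
qed

lemma limit_map_val_ring:
  assumes uf: "free_ultrafilter w" and "is_scale eta" and "scale_less w eta (\<lambda>n. 1)"
    and qm: "quotient_map (val_ring w eta) (max_ideal w eta) psi"
  shows "limit_map w (val_ring w eta) psi"
proof -
  have "w \<noteq> bot" using uf by (simp add: free_ultrafilter_def)
  have eta_0: "(eta \<longlongrightarrow> 0) w"
    using scale_less_1_tendsto_0[OF \<open>w \<noteq> bot\<close> assms(2,3)] .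
  obtain B where eta_pos: "\<And>n. 0 \<le> eta n" and eta_bound: "\<And>n. eta n \<le> B"
    using \<open>is_scale eta\<close> by (auto simp: is_scale_def less_imp_le)
  have "eventually (\<lambda>n. eta n \<le> 1) w"
    using order_tendstoD(2)[OF eta_0, of 1] by (auto elim: eventually_mono)
  note V = val_ring_max_ideal_eq[OF this]
  have bounded: "z \<in> val_ring w eta" if z: "Bseq z" for z
  proof -
    have "\<exists>L. ((\<lambda>n. cmod (z n) powr eta n) \<longlongrightarrow> L) w"
      by (rule Bseq_powr_tendsto[OF uf z]) (rule eta_pos eta_bound)+
    then obtain L where L: "((\<lambda>n. cmod (z n) powr eta n) \<longlongrightarrow> L) w" ..
    then have "L \<le> 1" using Bseq_powr_limit_le_1[OF \<open>w \<noteq> bot\<close> z eta_0 eta_pos] by simp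
    with L show ?thesis unfolding V by blast
  qed
  have kernel: "z \<in> val_ring w eta \<Longrightarrow> psi z = 0 \<longleftrightarrow> z \<in> max_ideal w eta" for z
    using qm by (simp add: quotient_map_def)
  show ?thesis
  proof unfold_locales
    fix z assume "Bseq z" and ev: "eventually (\<lambda>n. 1 \<le> cmod (z n)) w"
    show "psi z \<noteq> 0"
    proof
      assume "psi z = 0"
      then obtain L where "L < 1" and L: "((\<lambda>n. cmod (z n) powr eta n) \<longlongrightarrow> L) w"
        using kernel bounded[OF \<open>Bseq z\<close>] unfolding V by blast
      from tendsto_powr_ge_1[OF \<open>w \<noteq> bot\<close> L ev eta_pos] \<open>L < 1\<close> show False by simp
    qed
  next
    fix z u assume "Bseq z" and "psi z \<noteq> 0" and uz: "\<And>n. cmod (u n) * cmod (z n) \<le> 1"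
    obtain L where L: "((\<lambda>n. cmod (z n) powr eta n) \<longlongrightarrow> L) w"
      using bounded[OF \<open>Bseq z\<close>] unfolding V by blast
    have "\<not> L < 1"
      using L kernel bounded[OF \<open>Bseq z\<close>] \<open>psi z \<noteq> 0\<close> unfolding V by blast
    then obtain L' where L': "((\<lambda>n. cmod (u n) powr eta n) \<longlongrightarrow> L') w" and "L' \<le> 1 / L"
      using tendsto_powr_reciprocal_bound[OF uf _ _ eta_pos uz L] by fastforce
    moreover have "1 / L \<le> 1" using \<open>\<not> L < 1\<close> by simp
    ultimately have "L' \<le> 1" by linarith
    with L' show "u \<in> val_ring w eta" unfolding V by blast
  qed (use uf qm bounded in \<open>simp_all add: quotient_map_def\<close>)
qed

context limit_map
begin

lemma hom_diff: "Bseq z \<Longrightarrow> Bseq u \<Longrightarrow> phi (\<lambda>n. z n - u n) = phi z - phi u"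
  using hom_add[of "\<lambda>n. z n - u n" u] by (simp add: Bseq_minus Bseq_in_domain)

lemma hom_zero: "phi (\<lambda>n. 0) = 0"
  using hom_diff[of "\<lambda>n. 1" "\<lambda>n. 1"] by simp

lemma hom_sum:
  "finite I \<Longrightarrow> (\<And>i. i \<in> I \<Longrightarrow> Bseq (f i)) \<Longrightarrow> phi (\<lambda>n. \<Sum>i\<in>I. f i n) = (\<Sum>i\<in>I. phi (f i))"
proof (induction I rule: finite_induct)
  case empty
  then show ?case by (simp add: hom_zero)
next
  case (insert j I)
  then show ?case by (simp add: hom_add Bseq_in_domain Bseq_sum)
qed

lemma hom_of_nat: "phi (\<lambda>n. of_nat m) = of_nat m"
proof (induction m)
  case 0
  then show ?case by (simp add: hom_zero)
next
  case (Suc m)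
  then show ?case using hom_add[of "\<lambda>n. 1" "\<lambda>n. of_nat m"] by (simp add: Bseq_in_domain hom_one)
qed

lemma codomain_CHAR_eq_0: "CHAR('k) = 0"
proof -
  have "phi (\<lambda>n. of_nat m) \<noteq> 0" if "m > 0" for m
    using that by (intro nonzero_if_eventually_ge_1) auto
  then show ?thesis by (simp add: CHAR_eq0_iff hom_of_nat)
qed

lemma coeff_lim_form:
  assumes "\<And>n. degree (F n) \<le> N"
  shows "coeff (lim_form phi N F) i = phi (\<lambda>n. coeff (F n) i)"
proof (cases "i \<le> N")
  case True
  then show ?thesis by (simp add: lim_form_def coeff_sum)
next
  case False
  then have "(\<lambda>n. coeff (F n) i) = (\<lambda>n. 0)"
    using assms by (intro ext coeff_eq_0) (meson le_less_trans not_le)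
  then show ?thesis using False by (simp add: lim_form_def coeff_sum hom_zero)
qed

lemma lim_form_eq_if_degree_le:
  assumes "\<And>n. degree (F n) \<le> N" and "N \<le> M"
  shows "lim_form phi M F = lim_form phi N F"
proof -
  have "\<And>n. degree (F n) \<le> M" using assms by (meson order_trans)
  with assms(1) show ?thesis by (intro poly_eqI) (simp add: coeff_lim_form)
qed

lemma lim_form_mult:
  assumes "\<And>n. degree (F n) \<le> a" and "\<And>n. degree (G n) \<le> b"
    and "bounded_coeffs F" and "bounded_coeffs G"
  shows "lim_form phi (a + b) (\<lambda>n. F n * G n) = lim_form phi a F * lim_form phi b G"
proof (rule poly_eqI)
  fix i
  have "\<And>n. degree (F n * G n) \<le> a + b"
    using assms(1,2) by (meson add_mono degree_mult_le order_trans)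
  then have "coeff (lim_form phi (a + b) (\<lambda>n. F n * G n)) i
      = phi (\<lambda>n. \<Sum>j\<le>i. coeff (F n) j * coeff (G n) (i - j))"
    by (simp add: coeff_lim_form coeff_mult)
  also have "\<dots> = (\<Sum>j\<le>i. phi (\<lambda>n. coeff (F n) j) * phi (\<lambda>n. coeff (G n) (i - j)))"
    using assms(3,4) by (simp add: bounded_coeffs_def hom_sum Bseq_mult hom_mult Bseq_in_domain)
  finally show "coeff (lim_form phi (a + b) (\<lambda>n. F n * G n)) i = coeff (lim_form phi a F * lim_form phi b G) i"
    using assms(1,2) by (simp add: coeff_mult coeff_lim_form)
qed

lemma lim_form_diff:
  assumes "\<And>n. degree (F n) \<le> N" and "\<And>n. degree (G n) \<le> N"
    and "bounded_coeffs F" and "bounded_coeffs G"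
  shows "lim_form phi N (\<lambda>n. F n - G n) = lim_form phi N F - lim_form phi N G"
proof (rule poly_eqI)
  fix i
  have "\<And>n. degree (F n - G n) \<le> N" using assms(1,2) by (meson degree_diff_le)
  then show "coeff (lim_form phi N (\<lambda>n. F n - G n)) i = coeff (lim_form phi N F - lim_form phi N G) i"
    using assms by (simp add: coeff_lim_form hom_diff bounded_coeffs_def)
qed

lemma lim_form_pderiv:
  assumes "\<And>n. degree (F n) \<le> N" and "bounded_coeffs F"
  shows "lim_form phi N (\<lambda>n. pderiv (F n)) = pderiv (lim_form phi N F)"
proof (rule poly_eqI)
  fix i
  have "\<And>n. degree (pderiv (F n)) \<le> N"
    using assms(1) by (meson degree_pderiv_le diff_le_self order_trans)
  moreover have "phi (\<lambda>n. of_nat (Suc i) * coeff (F n) (Suc i))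
      = of_nat (Suc i) * phi (\<lambda>n. coeff (F n) (Suc i))"
    using assms(2) hom_mult[of "\<lambda>n. of_nat (Suc i)"] hom_of_nat[of "Suc i"]
    by (simp add: bounded_coeffs_def Bseq_in_domain del: of_nat_Suc)
  ultimately show "coeff (lim_form phi N (\<lambda>n. pderiv (F n))) i = coeff (pderiv (lim_form phi N F)) i"
    using assms(1) by (simp add: coeff_lim_form coeff_pderiv)
qed

lemma lim_form_wronskian:
  assumes "\<And>n. degree (P n) \<le> d" and "\<And>n. degree (Q n) \<le> d"
    and "bounded_coeffs P" and "bounded_coeffs Q"
  shows "lim_form phi (d + d) (\<lambda>n. wronskian (P n) (Q n)) = wronskian (lim_form phi d P) (lim_form phi d Q)"
proof -
  have deriv: "\<And>n. degree (pderiv (P n)) \<le> d" "\<And>n. degree (pderiv (Q n)) \<le> d"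
    using assms(1,2) by (meson degree_pderiv_le diff_le_self order_trans)+
  have "\<And>n. degree (pderiv (P n) * Q n) \<le> d + d" "\<And>n. degree (P n * pderiv (Q n)) \<le> d + d"
    using assms(1,2) deriv by (meson add_mono degree_mult_le order_trans)+
  then show ?thesis
    using assms deriv unfolding wronskian_def
    by (simp add: lim_form_diff lim_form_mult lim_form_pderiv bounded_coeffs_mult bounded_coeffs_pderiv)
qed

lemma lim_form_smult:
  assumes "lam \<in> A" and "\<And>n. degree (W n) \<le> N" and "bounded_coeffs W"
  shows "lim_form phi N (\<lambda>n. smult (lam n) (W n)) = smult (phi lam) (lim_form phi N W)"
  using assms by (intro poly_eqI) (simp add: coeff_lim_form hom_mult Bseq_in_domain bounded_coeffs_def)

lemma in_domain_if_smult_bounded: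
  assumes "\<And>n. degree (W n) \<le> N" and "bounded_coeffs W" and "lim_form phi N W \<noteq> 0"
    and "\<And>n i. cmod (lam n * coeff (W n) i) \<le> 1"
  shows "lam \<in> A"
proof -
  define j where "j = degree (lim_form phi N W)"
  have "coeff (lim_form phi N W) j \<noteq> 0" using assms(3) by (simp add: j_def)
  then have "phi (\<lambda>n. coeff (W n) j) \<noteq> 0" using assms(1) coeff_lim_form[of W N j] by simp
  then show ?thesis
    using assms(2,4) by (intro in_domain_if_dominated) (simp_all add: bounded_coeffs_def norm_mult)
qed

lemma lim_form_neq_0:
  assumes "\<And>n. degree (F n) \<le> N" and "\<And>n. cmod (coeff (F n) i) \<le> 1"
    and "eventually (\<lambda>n. cmod (coeff (F n) i) = 1) w"
  shows "lim_form phi N F \<noteq> 0"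
proof -
  have "phi (\<lambda>n. coeff (F n) i) \<noteq> 0"
    using assms(2,3) by (intro nonzero_if_eventually_ge_1 BseqI') (auto elim: eventually_mono)
  then have "coeff (lim_form phi N F) i \<noteq> 0" by (simp add: coeff_lim_form assms(1))
  then show ?thesis by auto
qed

lemma lim_form_normalized_form_neq_0:
  assumes "\<And>n. normalized_form N (F n)"
  shows "lim_form phi N F \<noteq> 0"
proof -
  have "eventually (\<lambda>n. \<exists>i\<in>{..N}. cmod (coeff (F n) i) = 1) w"
    by (intro always_eventually allI normalized_form_coeff_eq_1 assms)
  then have "\<exists>i\<in>{..N}. eventually (\<lambda>n. cmod (coeff (F n) i) = 1) w"
    by (rule free_ultrafilter_eventually_ex_finite[OF ultrafilter finite_atMost])
  then obtain i where "eventually (\<lambda>n. cmod (coeff (F n) i) = 1) w" by blast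
  moreover have "\<And>n. degree (F n) \<le> N" using assms by (simp add: normalized_form_def)
  ultimately show ?thesis
    using normalized_form_coeff_le_1[OF assms] by (intro lim_form_neq_0)
qed

lemma lim_form_normalized_pair_neq_0:
  assumes "\<And>n. normalized_pair N (P n) (Q n)"
  shows "lim_form phi N P \<noteq> 0 \<or> lim_form phi N Q \<noteq> 0"
proof -
  let ?I = "{..N} \<times> {P, Q}"
  have "\<exists>(i, F)\<in>?I. cmod (coeff (F n) i) = 1" for n
  proof -
    obtain i where "i \<in> {..N}" and "cmod (coeff (P n) i) = 1 \<or> cmod (coeff (Q n) i) = 1"
      using normalized_pair_coeff_eq_1[OF assms[of n]] ..
    then show ?thesis by auto
  qed
  then have "eventually (\<lambda>n. \<exists>(i, F)\<in>?I. cmod (coeff (F n) i) = 1) w"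
    by (intro always_eventually allI)
  then have "\<exists>(i, F)\<in>?I. eventually (\<lambda>n. cmod (coeff (F n) i) = 1) w"
    using free_ultrafilter_eventually_ex_finite[OF ultrafilter, of ?I "\<lambda>(i, F) n. cmod (coeff (F n) i) = 1"]
    by (simp add: case_prod_beta)
  then obtain i F where "F \<in> {P, Q}" and ev: "eventually (\<lambda>n. cmod (coeff (F n) i) = 1) w"
    by blast
  moreover have "\<And>n. degree (F n) \<le> N" "\<And>n. cmod (coeff (F n) i) \<le> 1"
    using \<open>F \<in> {P, Q}\<close> assms normalized_pair_coeff_le_1[OF assms]
    by (auto simp: normalized_pair_def)
  ultimately show ?thesis using lim_form_neq_0[OF _ _ ev] by blast
qed

lemma lim_form_eq_smult_wronskian:
  assumes "d \<ge> 1" and rm: "\<And>n. rat_map d (P n) (Q n)" and np: "\<And>n. normalized_pair d (P n) (Q n)"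
    and nf: "\<And>n. normalized_form (2 * d - 2) (F n)"
    and crit: "\<And>n x. x \<noteq> (0, 0) \<Longrightarrow> int (form_ord (2 * d - 2) (F n) x) = crit_div d (P n) (Q n) x"
    and W_neq_0: "wronskian (lim_form phi d P) (lim_form phi d Q) \<noteq> 0"
  shows "\<exists>c. c \<noteq> 0 \<and> lim_form phi (2 * d - 2) F = smult c (wronskian (lim_form phi d P) (lim_form phi d Q))"
proof -
  define M where "M = 2 * d - 2"
  define W where "W n = wronskian (P n) (Q n)" for n
  have deg_P: "\<And>n. degree (P n) \<le> d" and deg_Q: "\<And>n. degree (Q n) \<le> d"
    using np by (auto simp: normalized_pair_def)
  have deg_W: "\<And>n. degree (W n) \<le> M"
    unfolding W_def M_def using degree_wronskian_rat_map_le[OF _ rm \<open>d \<ge> 1\<close>] by simp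
  have bounded: "bounded_coeffs P" "bounded_coeffs Q" by (rule normalized_pair_bounded_coeffs[OF np])+
  then have bounded_W: "bounded_coeffs W"
    unfolding W_def wronskian_def by (intro bounded_coeffs_diff bounded_coeffs_mult bounded_coeffs_pderiv)
  have "lim_form phi M W = lim_form phi (d + d) W"
    by (rule lim_form_eq_if_degree_le[symmetric]) (use deg_W in \<open>auto simp: M_def\<close>)
  also have "\<dots> = wronskian (lim_form phi d P) (lim_form phi d Q)"
    unfolding W_def using deg_P deg_Q bounded by (rule lim_form_wronskian)
  finally have lim_W: "lim_form phi M W = wronskian (lim_form phi d P) (lim_form phi d Q)" .
  have "F n \<noteq> 0" for n using normalized_form_coeff_eq_1[OF nf[of n]] by auto
  then have "\<exists>c. F n = smult c (W n)" for n
    unfolding W_def by (rule complex_form_eq_smult_wronskian[OF rm \<open>d \<ge> 1\<close> _ crit])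
  then obtain lam where F: "\<And>n. F n = smult (lam n) (W n)" by metis
  have "lam \<in> A"
  proof (rule in_domain_if_smult_bounded[where W = W and N = M])
    show "lim_form phi M W \<noteq> 0" using W_neq_0 lim_W by simp
    show "cmod (lam n * coeff (W n) i) \<le> 1" for n i
      using normalized_form_coeff_le_1[OF nf[of n], of i] F[of n] by simp
  qed (fact deg_W bounded_W)+
  have "F = (\<lambda>n. smult (lam n) (W n))" using F by (rule ext)
  then have lim_F: "lim_form phi M F = smult (phi lam) (lim_form phi M W)"
    using \<open>lam \<in> A\<close> deg_W bounded_W by (simp add: lim_form_smult)
  moreover have "lim_form phi M F \<noteq> 0"
    using nf by (simp add: lim_form_normalized_form_neq_0 M_def)
  ultimately have "phi lam \<noteq> 0" by auto
  with lim_F lim_W show ?thesis unfolding M_def by (intro exI[of _ "phi lam"]) simp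
qed

lemma crit_limit_formula_holds:
  assumes "d \<ge> 1" and "\<And>n. rat_map d (P n) (Q n)" and np: "\<And>n. normalized_pair d (P n) (Q n)"
    and "\<And>n. normalized_form (2 * d - 2) (F n)"
    and "\<And>n x. x \<noteq> (0, 0) \<Longrightarrow> int (form_ord (2 * d - 2) (F n) x) = crit_div d (P n) (Q n) x"
  shows "crit_limit_formula phi d P Q F"
  unfolding crit_limit_formula_def
proof (intro allI impI)
  fix k e h ph qh and x :: "'k \<times> 'k"
  assume "k + e = d \<and> degree h \<le> k \<and> lim_form phi d P = h * ph \<and> lim_form phi d Q = h * qh
    \<and> rat_map e ph qh \<and> e \<ge> 1"
  then have "k + e = d" and "degree h \<le> k" and P: "lim_form phi d P = h * ph"
    and Q: "lim_form phi d Q = h * qh" and rm: "rat_map e ph qh" and "e \<ge> 1" by auto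
  assume "x \<noteq> (0, 0)"
  let ?W = "wronskian ph qh"
  have "h \<noteq> 0" using lim_form_normalized_pair_neq_0[OF np] P Q by auto
  have "?W \<noteq> 0" and deg_W: "degree ?W \<le> 2 * e - 2"
    using degree_wronskian_rat_map(1)[OF codomain_CHAR_eq_0 rm \<open>e \<ge> 1\<close>]
      degree_wronskian_rat_map_le[OF codomain_CHAR_eq_0 rm \<open>e \<ge> 1\<close>] by auto
  have hW: "h * ?W \<noteq> 0" "degree (h * ?W) \<le> k + (2 * e - 2)"
    using \<open>h \<noteq> 0\<close> \<open>?W \<noteq> 0\<close> \<open>degree h \<le> k\<close> deg_W by (auto simp: degree_mult_eq)
  have "wronskian (lim_form phi d P) (lim_form phi d Q) = h * (h * ?W)"
    unfolding P Q wronskian_mult_common by (simp add: power2_eq_square)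
  moreover have "h * (h * ?W) \<noteq> 0" using \<open>h \<noteq> 0\<close> hW(1) by simp
  ultimately obtain c where "c \<noteq> 0" and lim_F: "lim_form phi (2 * d - 2) F = smult c (h * (h * ?W))"
    using lim_form_eq_smult_wronskian[of d P Q F, OF assms] by auto
  have "form_ord (k + (k + (2 * e - 2))) (smult c (h * (h * ?W))) x
      = form_ord k h x + (form_ord k h x + form_ord (2 * e - 2) ?W x)"
    using \<open>c \<noteq> 0\<close> \<open>h \<noteq> 0\<close> \<open>?W \<noteq> 0\<close> hW \<open>degree h \<le> k\<close> deg_W
    by (simp add: form_ord_smult form_ord_mult)
  moreover have "2 * d - 2 = k + (k + (2 * e - 2))" using \<open>k + e = d\<close> \<open>e \<ge> 1\<close> by simp
  ultimately show "int (form_ord (2 * d - 2) (lim_form phi (2 * d - 2) F) x)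
      = crit_div e ph qh x + 2 * int (form_ord k h x)"
    unfolding lim_F using crit_div_eq_form_ord_wronskian[OF codomain_CHAR_eq_0 rm \<open>e \<ge> 1\<close> \<open>x \<noteq> (0, 0)\<close>]
    by simp
qed

end

theorem mainTheorem2:
  fixes w :: "nat filter" and eta :: "nat \<Rightarrow> real" and d :: nat
    and P Q F :: "nat \<Rightarrow> complex poly"
    and phi :: "(nat \<Rightarrow> complex) \<Rightarrow> 'k::field"
    and psi :: "(nat \<Rightarrow> complex) \<Rightarrow> 'r::field"
  assumes "free_ultrafilter w"
    and "is_scale eta"
    and "d \<ge> 1"
    and "\<And>n. rat_map d (P n) (Q n)"
    and "\<And>n. normalized_pair d (P n) (Q n)"
    and "\<And>n. normalized_form (2 * d - 2) (F n)"
    and "\<And>n x. x \<noteq> (0, 0) \<Longrightarrow> int (form_ord (2 * d - 2) (F n) x) = crit_div d (P n) (Q n) x"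
    and "quotient_map (admissible w eta) (negligible w eta) phi"
  shows "crit_limit_formula phi d P Q F
    \<and> (scale_less w eta (\<lambda>n. 1) \<longrightarrow> quotient_map (val_ring w eta) (max_ideal w eta) psi
         \<longrightarrow> crit_limit_formula psi d P Q F)"
proof (intro conjI impI)
  show "crit_limit_formula phi d P Q F"
    using limit_map.crit_limit_formula_holds[OF limit_map_admissible[OF assms(1,2,8)] assms(3-7)] .
next
  assume "scale_less w eta (\<lambda>n. 1)" and "quotient_map (val_ring w eta) (max_ideal w eta) psi"
  then show "crit_limit_formula psi d P Q F"
    using limit_map.crit_limit_formula_holds[OF limit_map_val_ring[OF assms(1,2)] assms(3-7)] by simp
qed

end
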